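(* Let $f:\{0,1\}^n\to\mathbb{R}$, $c$ in the image of $f$, and $I\subset[1..n]$. Let $Z=\{z\in\{0,1\}^n\mid z_i=0 \text{ for all } i\notin I\}$. Assume that for all $y\in\{0,1\}^n$ with $f(y)\le c$ we have $f(y\oplus z)=f(y)$ for all $z\in Z$. Then for any $(\mu+\lambda)$-elitist unary unbiased black-box algorithm optimizing $f$, any $t\ge 0$ and any $k\in[1..\mu]$, conditioned on the event $E_{t,c}=\{\max_{j\in[1..\mu]} f(x^{(t,j)})=c\}$, the bits $x^{(t,k)}_i$, $i\in I$, are mutually independent, independent of all other bits of $x^{(t,k)}$, and uniformly distributed in $\{0,1\}$.
   Context: A unary unbiased variation operator $V$ assigns to each $x\in\{0,1\}^n$ a probability distribution $V(x)$ on $\{0,1\}^n$ such that for all $x,y,z$, $\Pr[y=V(x)]=\Pr[y\oplus z=V(x\oplus z)]$, and for all permutations $\sigma$ of $[1..n]$, $\Pr[y=V(x)]=\Pr[\sigma(y)=V(\sigma(x))]$, where $\sigma(x)=(x_{\sigma(1)},\dots,x_{\sigma(n)})$. A $(\mu+\lambda)$-elitist unary unbiased black-box algorithm: generate $\mu$ search points $x^{(0,1)},\dots,x^{(0,\mu)}$ independently and uniformly at random and let $X$ be this population. In each iteration $t=1,2,\dots$, choose $\lambda$ individuals $p_1,\dots,p_\lambda$ from $X$ and $\lambda$ unary unbiased variation operators $V_1,\dots,V_\lambda$, sample $q_j\sim V_j(p_j)$, and let the new $X$ be a selection of $\mu$ best individuals of $X\cup\{q_1,\dots,q_\lambda\}$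 (ties broken arbitrarily). All choices (parents, operators, selection among ties) may depend only on the fitness values of the search points generated so far. The population after iteration $t$ is denoted $x^{(t,1)},\dots,x^{(t,\mu)}$. *)

theory Defs
  imports "HOL-Probability.Probability" "HOL-Combinatorics.Permutations"
begin

(* Search points of {0,1}^n are boolean lists of length n; bit positions are 0..n-1
   (the paper's positions 1..n shifted by one). *)
type_synonym bits = "bool list"
type_synonym varop = "bits \<Rightarrow> bits pmf"

definition cube :: "nat \<Rightarrow> bits set" where
  "cube n = {x. length x = n}"

definition uniform_cube :: "nat \<Rightarrow> bits pmf" where
  "uniform_cube n = pmf_of_set (cube n)"

definition xorv :: "bits \<Rightarrow> bits \<Rightarrow> bits" where
  "xorv x z = map2 (\<lambda>a b. a \<noteq> b) x z"

definition permv :: "nat \<Rightarrow> (nat \<Rightarrow> nat) \<Rightarrow> bits \<Rightarrow> bits" where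
  "permv n \<sigma> x = map (\<lambda>i. x ! \<sigma> i) [0..<n]"

definition unary_unbiased :: "nat \<Rightarrow> varop \<Rightarrow> bool" where
  "unary_unbiased n V \<longleftrightarrow>
     (\<forall>x\<in>cube n. set_pmf (V x) \<subseteq> cube n) \<and>
     (\<forall>x\<in>cube n. \<forall>y\<in>cube n. \<forall>z\<in>cube n.
        pmf (V x) y = pmf (V (xorv x z)) (xorv y z)) \<and>
     (\<forall>\<sigma>. \<sigma> permutes {..<n} \<longrightarrow> (\<forall>x\<in>cube n. \<forall>y\<in>cube n.
        pmf (V x) y = pmf (V (permv n \<sigma> x)) (permv n \<sigma> y)))"

fun indep_list :: "'a pmf list \<Rightarrow> 'a list pmf" where
  "indep_list [] = return_pmf []"
| "indep_list (p # ps) = bind_pmf p (\<lambda>x. map_pmf (\<lambda>xs. x # xs) (indep_list ps))"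

definition best_selection :: "nat \<Rightarrow> real list \<Rightarrow> nat list \<Rightarrow> bool" where
  "best_selection \<mu> fl sel \<longleftrightarrow> length sel = \<mu> \<and> distinct sel \<and> set sel \<subseteq> {..<length fl} \<and>
     (\<forall>i\<in>set sel. \<forall>j<length fl. j \<notin> set sel \<longrightarrow> fl ! j \<le> fl ! i)"

(* An algorithm is given by an internal state type 's (its memory), which is only ever
   fed with fitness values and its own (possibly random) choices:
   - init: from the fitness values of the initial population, an initial state;
   - vary: from the state, the parents (indices into the population) and operators;
   - select: from state, the variation choice and the fitness values of population @ offspring,
     the selected indices (into population @ offspring) and the new state. *)
definition elitist_unbiased_alg ::
  "nat \<Rightarrow> nat \<Rightarrow> nat \<Rightarrow> ('s \<Rightarrow> (nat list \<times> varop list) pmf)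
     \<Rightarrow> ('s \<Rightarrow> nat list \<times> varop list \<Rightarrow> real list \<Rightarrow> (nat list \<times> 's) pmf) \<Rightarrow> bool" where
  "elitist_unbiased_alg n \<mu> lam vary select \<longleftrightarrow>
     (\<forall>s. \<forall>ch\<in>set_pmf (vary s).
        length (fst ch) = lam \<and> set (fst ch) \<subseteq> {..<\<mu>} \<and> length (snd ch) = lam \<and>
        (\<forall>V\<in>set (snd ch). unary_unbiased n V)) \<and>
     (\<forall>s ch fl. length fl = \<mu> + lam \<longrightarrow>
        (\<forall>r\<in>set_pmf (select s ch fl). best_selection \<mu> fl (fst r)))"

definition ea_init :: "nat \<Rightarrow> nat \<Rightarrow> (bits \<Rightarrow> real) \<Rightarrow> (real list \<Rightarrow> 's pmf) \<Rightarrow> (bits list \<times> 's) pmf" where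
  "ea_init n \<mu> f init =
     bind_pmf (indep_list (replicate \<mu> (uniform_cube n)))
       (\<lambda>P. map_pmf (\<lambda>s. (P, s)) (init (map f P)))"

definition ea_step :: "nat \<Rightarrow> (bits \<Rightarrow> real) \<Rightarrow> ('s \<Rightarrow> (nat list \<times> varop list) pmf)
     \<Rightarrow> ('s \<Rightarrow> nat list \<times> varop list \<Rightarrow> real list \<Rightarrow> (nat list \<times> 's) pmf)
     \<Rightarrow> bits list \<times> 's \<Rightarrow> (bits list \<times> 's) pmf" where
  "ea_step lam f vary select st =
     (case st of (P, s) \<Rightarrow>
       bind_pmf (vary s) (\<lambda>(par, ops).
         bind_pmf (indep_list (map (\<lambda>j. (ops ! j) (P ! (par ! j))) [0..<lam])) (\<lambda>Q.
           map_pmf (\<lambda>(sel, s'). (map (\<lambda>i. (P @ Q) ! i) sel, s'))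
             (select s (par, ops) (map f (P @ Q))))))"

fun ea_run :: "nat \<Rightarrow> nat \<Rightarrow> nat \<Rightarrow> (bits \<Rightarrow> real) \<Rightarrow> (real list \<Rightarrow> 's pmf)
     \<Rightarrow> ('s \<Rightarrow> (nat list \<times> varop list) pmf)
     \<Rightarrow> ('s \<Rightarrow> nat list \<times> varop list \<Rightarrow> real list \<Rightarrow> (nat list \<times> 's) pmf)
     \<Rightarrow> nat \<Rightarrow> (bits list \<times> 's) pmf" where
  "ea_run n \<mu> lam f init vary select 0 = ea_init n \<mu> f init"
| "ea_run n \<mu> lam f init vary select (Suc t) =
     bind_pmf (ea_run n \<mu> lam f init vary select t) (ea_step lam f vary select)"

definition Zset :: "nat \<Rightarrow> nat set \<Rightarrow> bits set" where
  "Zset n I = {z \<in> cube n. \<forall>i<n. i \<notin> I \<longrightarrow> \<not> z ! i}"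

definition best_is :: "(bits \<Rightarrow> real) \<Rightarrow> real \<Rightarrow> (bits list \<times> 's) set" where
  "best_is f c = {st. Max (f ` set (fst st)) = c}"

(* random variables: bit i (i in I) as Some i, the vector of all remaining bits as None *)
definition bit_family :: "nat \<Rightarrow> nat set \<Rightarrow> nat option \<Rightarrow> bits \<Rightarrow> bool + bool list" where
  "bit_family n I j x = (case j of Some i \<Rightarrow> Inl (x ! i)
                                | None \<Rightarrow> Inr (map (\<lambda>l. x ! l) (filter (\<lambda>l. l \<notin> I) [0..<n])))"

end

theory Submission
  imports Defs
begin

text \<open>
  Flipping a bit a \<in> I commutes with every unary unbiased operator and, by hypothesis, leaves
  every fitness value \<le> c unchanged. The capped fitness, which agrees with f up to c and is
  constant above c, is therefore invariant under the flip on the whole cube, and so the joint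
  distribution of populations and algorithm states of the run under the capped fitness is
  invariant under flipping bit a in every individual. By elitism, a population with all
  fitnesses \<le> c only descends from such populations, along which f and the capped fitness
  look the same to the algorithm; so both runs give such populations the same probability.
  Conditioned on E_{t,c}, the population is thus invariant under every flip a \<in> I, and a
  distribution on {0,1}^n invariant under these flips has independent uniform bits in I that
  are independent of the remaining bits.
\<close>

section \<open>Flipping a single bit\<close>

definition flip :: "nat \<Rightarrow> bits \<Rightarrow> bits" where
  "flip a x = x[a := \<not> x ! a]"

lemma flip_flip [simp]: "flip a (flip a x) = x"
  unfolding flip_def by (cases "a < length x") (auto simp: list_update_beyond)

lemma length_flip [simp]: "length (flip a x) = length x"
  unfolding flip_def by simp

lemma flip_in_cube_iff [simp]: "flip a x \<in> cube n \<longleftrightarrow> x \<in> cube n"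
  unfolding cube_def by simp

lemma inj_flip: "inj (flip a)"
  by (metis flip_flip injI)

lemma nth_flip: "i \<noteq> a \<Longrightarrow> flip a x ! i = x ! i"
  unfolding flip_def by simp

lemma nth_flip_same: "a < length x \<Longrightarrow> flip a x ! a = (\<not> x ! a)"
  unfolding flip_def by simp

definition unit_bits :: "nat \<Rightarrow> nat \<Rightarrow> bits" where
  "unit_bits n a = (replicate n False)[a := True]"

lemma unit_bits_in_Zset: "a \<in> I \<Longrightarrow> a < n \<Longrightarrow> unit_bits n a \<in> Zset n I"
  unfolding unit_bits_def Zset_def cube_def by (auto simp: nth_list_update)

lemma xorv_unit_bits:
  assumes "x \<in> cube n" "a < n"
  shows "xorv x (unit_bits n a) = flip a x"
  using assms
  by (intro nth_equalityI) (auto simp: xorv_def unit_bits_def flip_def cube_def nth_list_update)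

lemma unary_unbiased_flip:
  assumes V: "unary_unbiased n V" and x: "x \<in> cube n" and a: "a < n"
  shows "V (flip a x) = map_pmf (flip a) (V x)"
proof (rule pmf_eqI)
  fix y
  have flipped: "pmf (map_pmf (flip a) (V x)) y = pmf (V x) (flip a y)"
    by (metis flip_flip inj_flip pmf_map_inj')
  show "pmf (V (flip a x)) y = pmf (map_pmf (flip a) (V x)) y"
  proof (cases "y \<in> cube n")
    case True
    have "flip a y \<in> cube n" "unit_bits n a \<in> cube n"
      using True unfolding unit_bits_def cube_def by simp_all
    then have "pmf (V x) (flip a y) = pmf (V (xorv x (unit_bits n a))) (xorv (flip a y) (unit_bits n a))"
      using V x unfolding unary_unbiased_def by blast
    then show ?thesis
      using flipped xorv_unit_bits[OF x a] xorv_unit_bits[of "flip a y" n a] True a by simp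
  next
    case False
    have "flip a x \<in> cube n" "flip a y \<notin> cube n"
      using x False by simp_all
    then have "y \<notin> set_pmf (V (flip a x))" "flip a y \<notin> set_pmf (V x)"
      using V x False unfolding unary_unbiased_def by blast+
    then show ?thesis
      using flipped by (simp add: set_pmf_iff)
  qed
qed

section \<open>Flip-invariant distributions on the cube\<close>

lemma measure_pmf_bit_eq_half:
  fixes D :: "bits pmf"
  assumes supp: "set_pmf D \<subseteq> cube n" and a: "a < n"
    and inv: "map_pmf (flip a) D = D"
    and F: "\<forall>x\<in>cube n. flip a x \<in> F \<longleftrightarrow> x \<in> F"
  shows "measure_pmf.prob D (F \<inter> {x. x ! a = b}) = measure_pmf.prob D F / 2"
proof -
  have swap: "measure_pmf.prob D (F \<inter> {x. x ! a = b'}) = measure_pmf.prob D (F \<inter> {x. x ! a = (\<not> b')})"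
    for b'
  proof -
    have "flip a x \<in> F \<and> flip a x ! a = b' \<longleftrightarrow> x \<in> F \<and> x ! a = (\<not> b')" if "x \<in> set_pmf D" for x
    proof -
      have "x \<in> cube n"
        using that supp by blast
      then show ?thesis
        using F a by (auto simp: cube_def nth_flip_same)
    qed
    then have support: "flip a -` (F \<inter> {x. x ! a = b'}) \<inter> set_pmf D = F \<inter> {x. x ! a = (\<not> b')} \<inter> set_pmf D"
      by blast
    have "measure_pmf.prob D (F \<inter> {x. x ! a = b'}) = measure_pmf.prob (map_pmf (flip a) D) (F \<inter> {x. x ! a = b'})"
      by (simp only: inv)
    also have "\<dots> = measure_pmf.prob D (flip a -` (F \<inter> {x. x ! a = b'}) \<inter> set_pmf D)"
      by (simp only: measure_map_pmf measure_Int_set_pmf)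
    also have "\<dots> = measure_pmf.prob D (F \<inter> {x. x ! a = (\<not> b')})"
      by (simp only: support measure_Int_set_pmf)
    finally show ?thesis .
  qed
  have "measure_pmf.prob D F = measure_pmf.prob D (F \<inter> {x. x ! a = b} \<union> F \<inter> {x. x ! a = (\<not> b)})"
    by (rule arg_cong[where f = "measure_pmf.prob D"]) auto
  also have "\<dots> = measure_pmf.prob D (F \<inter> {x. x ! a = b}) + measure_pmf.prob D (F \<inter> {x. x ! a = (\<not> b)})"
    by (rule measure_pmf.finite_measure_Union) auto
  finally show ?thesis
    using swap[of b] by linarith
qed

lemma measure_pmf_bit_in_set:
  fixes D :: "bits pmf"
  assumes "set_pmf D \<subseteq> cube n" "a < n" "map_pmf (flip a) D = D"
    and "\<forall>x\<in>cube n. flip a x \<in> F \<longleftrightarrow> x \<in> F"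
  shows "measure_pmf.prob D (F \<inter> {x. x ! a \<in> C}) = real (card C) / 2 * measure_pmf.prob D F"
proof -
  have "F \<inter> {x. x ! a \<in> C} = (\<Union>b\<in>C. F \<inter> {x. x ! a = b})"
    by auto
  moreover have "measure_pmf.prob D (\<Union>b\<in>C. F \<inter> {x. x ! a = b})
      = (\<Sum>b\<in>C. measure_pmf.prob D (F \<inter> {x. x ! a = b}))"
    by (rule measure_pmf.finite_measure_finite_Union) (auto simp: disjoint_family_on_def)
  ultimately show ?thesis
    using measure_pmf_bit_eq_half[OF assms] by simp
qed

lemma measure_pmf_bits_in_sets:
  fixes D :: "bits pmf"
  assumes supp: "set_pmf D \<subseteq> cube n" and I: "I \<subseteq> {..<n}"
    and inv: "\<forall>a\<in>I. map_pmf (flip a) D = D"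
    and F: "\<forall>a\<in>I. \<forall>x\<in>cube n. flip a x \<in> F \<longleftrightarrow> x \<in> F"
    and K: "finite K" "K \<subseteq> I"
  shows "measure_pmf.prob D (F \<inter> {x. \<forall>i\<in>K. x ! i \<in> C i})
    = measure_pmf.prob D F * (\<Prod>i\<in>K. real (card (C i)) / 2)"
  using K
proof (induction K rule: finite_induct)
  case empty
  then show ?case by simp
next
  case (insert a K)
  let ?G = "F \<inter> {x. \<forall>i\<in>K. x ! i \<in> C i}"
  have a: "a \<in> I" "a < n"
    using insert.prems I by auto
  have IH: "measure_pmf.prob D ?G = measure_pmf.prob D F * (\<Prod>i\<in>K. real (card (C i)) / 2)"
    using insert.IH insert.prems by simp
  have "flip a x ! i = x ! i" if "i \<in> K" for x i
    using insert.hyps(2) that nth_flip by metis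
  then have "\<forall>x\<in>cube n. flip a x \<in> ?G \<longleftrightarrow> x \<in> ?G"
    using F a(1) by auto
  then have bit_a: "measure_pmf.prob D (?G \<inter> {x. x ! a \<in> C a})
      = real (card (C a)) / 2 * measure_pmf.prob D ?G"
    using measure_pmf_bit_in_set[OF supp a(2)] inv a(1) by blast
  have "F \<inter> {x. \<forall>i\<in>insert a K. x ! i \<in> C i} = ?G \<inter> {x. x ! a \<in> C a}"
    by auto
  then have "measure_pmf.prob D (F \<inter> {x. \<forall>i\<in>insert a K. x ! i \<in> C i})
      = real (card (C a)) / 2 * measure_pmf.prob D ?G"
    by (simp only: bit_a)
  also have "\<dots> = measure_pmf.prob D F * (\<Prod>i\<in>insert a K. real (card (C i)) / 2)"
    by (simp add: IH prod.insert[OF insert.hyps])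
  finally show ?case .
qed

lemma flip_invariant_bit_uniform:
  fixes D :: "bits pmf"
  assumes "set_pmf D \<subseteq> cube n" "i < n" "map_pmf (flip i) D = D"
  shows "measure_pmf.prob D {x. x ! i = b} = 1 / 2"
  using measure_pmf_bit_eq_half[OF assms, of UNIV b] by simp

lemma bit_family_None_flip:
  assumes "a \<in> I"
  shows "bit_family n I None (flip a x) = bit_family n I None x"
proof -
  have "flip a x ! l = x ! l" if "l \<notin> I" for l
    using assms that nth_flip by metis
  then show ?thesis
    unfolding bit_family_def by simp
qed

lemma INT_option_split: "(\<Inter>j\<in>J. A j) = (\<Inter>i\<in>Some -` J. A (Some i)) \<inter> (\<Inter>j\<in>J \<inter> {None}. A j)"
proof -
  have "x \<in> A j" if "j \<in> J" "\<forall>i\<in>Some -` J. x \<in> A (Some i)" "\<forall>j\<in>J \<inter> {None}. x \<in> A j" for x j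
    using that by (cases j) auto
  then show ?thesis
    by blast
qed

lemma prod_option_split:
  assumes "finite J"
  shows "(\<Prod>j\<in>J. g j) = (\<Prod>i\<in>Some -` J. g (Some i)) * (\<Prod>j\<in>J \<inter> {None}. g j)"
proof -
  have "J = Some ` (Some -` J) \<union> (J \<inter> {None})"
    by (auto elim: option.exhaust_sel)
  then have "(\<Prod>j\<in>J. g j) = (\<Prod>j\<in>Some ` (Some -` J) \<union> (J \<inter> {None}). g j)"
    by (rule arg_cong)
  also have "\<dots> = (\<Prod>j\<in>Some ` (Some -` J). g j) * (\<Prod>j\<in>J \<inter> {None}. g j)"
    using assms by (intro prod.union_disjoint) (auto intro: finite_vimageI)
  finally show ?thesis
    by (simp only: prod.reindex inj_Some o_def)
qed

lemma flip_invariant_indep_bits: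
  fixes D :: "bits pmf"
  assumes supp: "set_pmf D \<subseteq> cube n" and I: "I \<subseteq> {..<n}"
    and inv: "\<forall>a\<in>I. map_pmf (flip a) D = D"
  shows "prob_space.indep_vars (measure_pmf D) (\<lambda>_. count_space UNIV) (bit_family n I) (Some ` I \<union> {None})"
  unfolding prob_space.indep_vars_def2[OF prob_space_measure_pmf]
    prob_space.indep_sets_def[OF prob_space_measure_pmf]
proof (intro conjI ballI allI impI)
  fix J A
  assume J: "J \<subseteq> Some ` I \<union> {None}" "finite J"
    and A: "A \<in> (\<Pi> j\<in>J. {bit_family n I j -` A \<inter> space (measure_pmf D) |A. A \<in> sets (count_space UNIV)})"
  have "\<forall>j\<in>J. \<exists>B. A j = bit_family n I j -` B"
    using A by auto
  then obtain B where B: "\<forall>j\<in>J. A j = bit_family n I j -` B j"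
    by metis
  define K where "K = Some -` J"
  define C where "C i = {b. Inl b \<in> B (Some i)}" for i
  define F where "F = (if None \<in> J then bit_family n I None -` B None else UNIV)"
  have K: "finite K" "K \<subseteq> I"
    unfolding K_def using J by (auto intro: finite_vimageI)
  have A_Some: "A (Some i) = {x. x ! i \<in> C i}" if "i \<in> K" for i
    using B that unfolding K_def C_def by (auto simp: bit_family_def)
  have F_inv: "\<forall>a\<in>I. \<forall>x\<in>cube n. flip a x \<in> F \<longleftrightarrow> x \<in> F"
    unfolding F_def using bit_family_None_flip by auto
  have "(\<Inter>j\<in>J. A j) = F \<inter> {x. \<forall>i\<in>K. x ! i \<in> C i}"
    unfolding INT_option_split[where J = J] K_def[symmetric] using A_Some B unfolding F_def by auto
  then have "measure_pmf.prob D (\<Inter>j\<in>J. A j) = measure_pmf.prob D F * (\<Prod>i\<in>K. real (card (C i)) / 2)"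
    using measure_pmf_bits_in_sets[OF supp I inv F_inv K] by simp
  also have "(\<Prod>i\<in>K. real (card (C i)) / 2) = (\<Prod>i\<in>K. measure_pmf.prob D (A (Some i)))"
    using measure_pmf_bit_in_set[OF supp, of _ UNIV] inv I K(2)
    by (auto simp: A_Some subset_iff intro!: prod.cong)
  also have "measure_pmf.prob D F = (\<Prod>j\<in>J \<inter> {None}. measure_pmf.prob D (A j))"
    unfolding F_def using B by auto
  finally show "measure_pmf.prob D (\<Inter>j\<in>J. A j) = (\<Prod>j\<in>J. measure_pmf.prob D (A j))"
    unfolding prod_option_split[OF J(2)] K_def by (simp only: mult.commute)
qed simp_all

lemma flip_invariant_bits_indep_uniform:
  fixes D :: "bits pmf"
  assumes supp: "set_pmf D \<subseteq> cube n" and I: "I \<subseteq> {..<n}"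
    and inv: "\<forall>a\<in>I. map_pmf (flip a) D = D"
  shows "prob_space.indep_vars (measure_pmf D) (\<lambda>_. count_space UNIV) (bit_family n I) (Some ` I \<union> {None})
    \<and> (\<forall>i\<in>I. \<forall>b. measure_pmf.prob D {x. x ! i = b} = 1 / 2)"
proof (intro conjI ballI allI)
  fix i b assume "i \<in> I"
  then show "measure_pmf.prob D {x. x ! i = b} = 1 / 2"
    using flip_invariant_bit_uniform[OF supp] inv I by blast
qed (rule flip_invariant_indep_bits[OF supp I inv])

section \<open>Runs of the algorithm\<close>

lemma set_pmf_indep_list: "set_pmf (indep_list ps) = {xs. list_all2 (\<lambda>x p. x \<in> set_pmf p) xs ps}"
proof (induction ps)
  case Nil
  then show ?case by simp
next
  case (Cons p ps)
  show ?case
  proof (rule set_eqI)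
    fix xs
    show "xs \<in> set_pmf (indep_list (p # ps)) \<longleftrightarrow> xs \<in> {xs. list_all2 (\<lambda>x p. x \<in> set_pmf p) xs (p # ps)}"
      by (cases xs) (auto simp: Cons.IH)
  qed
qed

lemma set_pmf_indep_list_replicate:
  "set_pmf (indep_list (replicate m p)) = {xs. length xs = m \<and> set xs \<subseteq> set_pmf p}"
  by (auto simp: set_pmf_indep_list list_all2_conv_all_nth subset_code(1) all_set_conv_all_nth)

lemma map_pmf_indep_list: "map_pmf (map g) (indep_list ps) = indep_list (map (map_pmf g) ps)"
proof (induction ps)
  case Nil
  then show ?case by simp
next
  case (Cons p ps)
  have "map_pmf (\<lambda>xs. g x # map g xs) (indep_list ps) = map_pmf (Cons (g x)) (map_pmf (map g) (indep_list ps))"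
    for x
    by (simp add: pmf.map_comp o_def)
  then show ?case
    by (simp add: map_bind_pmf bind_map_pmf pmf.map_comp o_def Cons.IH)
qed

lemma finite_cube: "finite (cube n)"
  using finite_lists_length_eq[of "UNIV :: bool set" n] unfolding cube_def by simp

lemma cube_not_empty: "cube n \<noteq> {}"
proof -
  have "replicate n False \<in> cube n"
    unfolding cube_def by simp
  then show ?thesis
    by blast
qed

lemma set_uniform_cube [simp]: "set_pmf (uniform_cube n) = cube n"
  unfolding uniform_cube_def using finite_cube cube_not_empty by simp

lemma map_flip_uniform_cube: "map_pmf (flip a) (uniform_cube n) = uniform_cube n"
proof -
  have "flip a ` cube n = cube n"
    by (auto simp: image_iff) (metis flip_flip flip_in_cube_iff)
  then show ?thesis
    unfolding uniform_cube_def
    by (subst map_pmf_of_set_inj) (auto intro: inj_on_subset[OF inj_flip] simp: finite_cube cube_not_empty)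
qed

definition valid_states :: "nat \<Rightarrow> nat \<Rightarrow> (bits list \<times> 's) set" where
  "valid_states \<mu> n = {st. length (fst st) = \<mu> \<and> set (fst st) \<subseteq> cube n}"

definition flip_state :: "nat \<Rightarrow> bits list \<times> 's \<Rightarrow> bits list \<times> 's" where
  "flip_state a st = (map (flip a) (fst st), snd st)"

lemma flip_state_flip_state [simp]: "flip_state a (flip_state a st) = st"
  unfolding flip_state_def by (simp add: map_idI)

lemma flip_state_Pair: "flip_state a (P, s) = (map (flip a) P, s)"
  unfolding flip_state_def by simp

lemma inj_flip_state: "inj (flip_state a)"
  by (metis flip_state_flip_state injI)

definition offspring :: "nat \<Rightarrow> nat list \<Rightarrow> varop list \<Rightarrow> bits list \<Rightarrow> bits list pmf" where
  "offspring lam par ops P = indep_list (map (\<lambda>j. (ops ! j) (P ! (par ! j))) [0..<lam])"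

definition survivors ::
  "(bits \<Rightarrow> real) \<Rightarrow> ('s \<Rightarrow> nat list \<times> varop list \<Rightarrow> real list \<Rightarrow> (nat list \<times> 's) pmf)
     \<Rightarrow> 's \<Rightarrow> nat list \<times> varop list \<Rightarrow> bits list \<Rightarrow> (bits list \<times> 's) pmf" where
  "survivors g select s ch L = map_pmf (\<lambda>(sel, s'). (map ((!) L) sel, s')) (select s ch (map g L))"

lemma ea_step_eq:
  "ea_step lam g vary select (P, s) =
     bind_pmf (vary s) (\<lambda>(par, ops).
       bind_pmf (offspring lam par ops P) (\<lambda>Q. survivors g select s (par, ops) (P @ Q)))"
  by (simp add: ea_step_def offspring_def survivors_def)

lemma ea_step_supportE:
  assumes "y \<in> set_pmf (ea_step lam g vary select (P, s))"
  obtains par ops Q where "(par, ops) \<in> set_pmf (vary s)" "Q \<in> set_pmf (offspring lam par ops P)"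
    "y \<in> set_pmf (survivors g select s (par, ops) (P @ Q))"
  using assms unfolding ea_step_eq by auto

lemma elitist_unbiased_alg_selectD:
  assumes "elitist_unbiased_alg n \<mu> lam vary select" "length fl = \<mu> + lam" "r \<in> set_pmf (select s ch fl)"
  shows "best_selection \<mu> fl (fst r)"
  using assms unfolding elitist_unbiased_alg_def by blast

lemma elitist_unbiased_alg_varyD:
  assumes alg: "elitist_unbiased_alg n \<mu> lam vary select" and ch: "(par, ops) \<in> set_pmf (vary s)"
    and P: "(P, s) \<in> valid_states \<mu> n" and j: "j < lam"
  shows "par ! j < length P" "P ! (par ! j) \<in> cube n" "unary_unbiased n (ops ! j)"
proof -
  have choice: "length par = lam" "set par \<subseteq> {..<\<mu>}" "length ops = lam" "\<forall>V\<in>set ops. unary_unbiased n V"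
    using alg ch unfolding elitist_unbiased_alg_def by fastforce+
  then have "par ! j \<in> set par" "ops ! j \<in> set ops"
    using j by simp_all
  then show parent: "par ! j < length P" and "unary_unbiased n (ops ! j)"
    using choice P unfolding valid_states_def by auto
  then have "P ! (par ! j) \<in> set P"
    by simp
  then show "P ! (par ! j) \<in> cube n"
    using P unfolding valid_states_def by auto
qed

lemma length_offspring: "Q \<in> set_pmf (offspring lam par ops P) \<Longrightarrow> length Q = lam"
  by (auto simp: offspring_def set_pmf_indep_list dest: list_all2_lengthD)

lemma offspring_in_cube:
  assumes alg: "elitist_unbiased_alg n \<mu> lam vary select" and ch: "(par, ops) \<in> set_pmf (vary s)"
    and P: "(P, s) \<in> valid_states \<mu> n" and Q: "Q \<in> set_pmf (offspring lam par ops P)"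
  shows "set Q \<subseteq> cube n"
proof
  fix q assume "q \<in> set Q"
  then obtain j where j: "j < lam" and q: "q = Q ! j"
    using length_offspring[OF Q] by (auto simp: in_set_conv_nth)
  have "list_all2 (\<lambda>x p. x \<in> set_pmf p) Q (map (\<lambda>j. (ops ! j) (P ! (par ! j))) [0..<lam])"
    using Q unfolding offspring_def set_pmf_indep_list by simp
  from list_all2_nthD2[OF this] have "q \<in> set_pmf ((ops ! j) (P ! (par ! j)))"
    using j q by simp
  then show "q \<in> cube n"
    using elitist_unbiased_alg_varyD[OF alg ch P j] unfolding unary_unbiased_def by blast
qed

lemma offspring_map_flip:
  assumes alg: "elitist_unbiased_alg n \<mu> lam vary select" and ch: "(par, ops) \<in> set_pmf (vary s)"
    and P: "(P, s) \<in> valid_states \<mu> n" and a: "a < n"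
  shows "offspring lam par ops (map (flip a) P) = map_pmf (map (flip a)) (offspring lam par ops P)"
proof -
  have "(ops ! j) (map (flip a) P ! (par ! j)) = map_pmf (flip a) ((ops ! j) (P ! (par ! j)))" if "j < lam" for j
    using elitist_unbiased_alg_varyD[OF alg ch P that] unary_unbiased_flip a by simp
  then show ?thesis
    unfolding offspring_def map_pmf_indep_list by (auto intro!: arg_cong[where f = indep_list])
qed

lemma set_survivors:
  assumes alg: "elitist_unbiased_alg n \<mu> lam vary select" and L: "length L = \<mu> + lam"
    and st: "st \<in> set_pmf (survivors g select s ch L)"
  shows "length (fst st) = \<mu>" "set (fst st) \<subseteq> set L"
proof -
  obtain r where r: "r \<in> set_pmf (select s ch (map g L))" and st: "st = (map ((!) L) (fst r), snd r)"
    using st unfolding survivors_def by auto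
  have "best_selection \<mu> (map g L) (fst r)"
    using elitist_unbiased_alg_selectD[OF alg _ r] L by simp
  then show "length (fst st) = \<mu>" "set (fst st) \<subseteq> set L"
    unfolding st best_selection_def by auto
qed

lemma best_selection_max:
  assumes "best_selection \<mu> fl sel" "0 < \<mu>" "j < length fl"
  shows "\<exists>i\<in>set sel. fl ! j \<le> fl ! i"
proof (cases "j \<in> set sel")
  case False
  obtain i where "i \<in> set sel"
    using assms(1,2) unfolding best_selection_def by (cases sel) auto
  then show ?thesis
    using assms False unfolding best_selection_def by blast
qed blast

lemma survivors_below_imp_candidates_below:
  assumes alg: "elitist_unbiased_alg n \<mu> lam vary select" and \<mu>: "0 < \<mu>" and L: "length L = \<mu> + lam"
    and st: "st \<in> set_pmf (survivors g select s ch L)" and below: "\<forall>x\<in>set (fst st). g x \<le> c"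
  shows "\<forall>x\<in>set L. g x \<le> c"
proof
  fix x assume "x \<in> set L"
  then obtain j where j: "j < length L" "x = L ! j"
    by (auto simp: in_set_conv_nth)
  obtain r where r: "r \<in> set_pmf (select s ch (map g L))" and st_eq: "st = (map ((!) L) (fst r), snd r)"
    using st unfolding survivors_def by auto
  have sel: "best_selection \<mu> (map g L) (fst r)"
    using elitist_unbiased_alg_selectD[OF alg _ r] L by simp
  then obtain i where i: "i \<in> set (fst r)" "map g L ! j \<le> map g L ! i"
    using best_selection_max[OF sel \<mu>, of j] j by auto
  moreover have "i < length L"
    using sel i(1) unfolding best_selection_def by auto
  ultimately have "g x \<le> g (L ! i)" "L ! i \<in> set (fst st)"
    using j st_eq by auto
  then show "g x \<le> c"
    using below by force
qed

lemma survivors_map_flip: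
  assumes alg: "elitist_unbiased_alg n \<mu> lam vary select" and L: "length L = \<mu> + lam"
    and g: "\<forall>x\<in>set L. g (flip a x) = g x"
  shows "survivors g select s ch (map (flip a) L) = map_pmf (flip_state a) (survivors g select s ch L)"
proof -
  have "map g (map (flip a) L) = map g L"
    using g by simp
  then have "survivors g select s ch (map (flip a) L)
      = map_pmf (\<lambda>(sel, s'). (map ((!) (map (flip a) L)) sel, s')) (select s ch (map g L))"
    unfolding survivors_def by (simp only:)
  also have "\<dots> = map_pmf (flip_state a \<circ> (\<lambda>(sel, s'). (map ((!) L) sel, s'))) (select s ch (map g L))"
  proof (rule map_pmf_cong[OF refl])
    fix r assume "r \<in> set_pmf (select s ch (map g L))"
    then have "best_selection \<mu> (map g L) (fst r)"
      using elitist_unbiased_alg_selectD[OF alg] L by simp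
    then have "set (fst r) \<subseteq> {..<length L}"
      unfolding best_selection_def by simp
    then show "(\<lambda>(sel, s'). (map ((!) (map (flip a) L)) sel, s')) r
        = (flip_state a \<circ> (\<lambda>(sel, s'). (map ((!) L) sel, s'))) r"
      by (auto simp: flip_state_def split_beta)
  qed
  also have "\<dots> = map_pmf (flip_state a) (survivors g select s ch L)"
    by (simp add: survivors_def pmf.map_comp)
  finally show ?thesis .
qed

lemma ea_step_valid:
  assumes alg: "elitist_unbiased_alg n \<mu> lam vary select" and st: "st \<in> valid_states \<mu> n"
    and y: "y \<in> set_pmf (ea_step lam g vary select st)"
  shows "y \<in> valid_states \<mu> n"
proof -
  obtain P s where Ps: "st = (P, s)"
    by fastforce
  from y obtain par ops Q where ch: "(par, ops) \<in> set_pmf (vary s)"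
    and Q: "Q \<in> set_pmf (offspring lam par ops P)" and y: "y \<in> set_pmf (survivors g select s (par, ops) (P @ Q))"
    unfolding Ps by (rule ea_step_supportE)
  have "length (P @ Q) = \<mu> + lam" "set (P @ Q) \<subseteq> cube n"
    using st Ps length_offspring[OF Q] offspring_in_cube[OF alg ch _ Q] unfolding valid_states_def by auto
  then show ?thesis
    using set_survivors[OF alg _ y] unfolding valid_states_def by auto
qed

lemma ea_run_valid:
  assumes alg: "elitist_unbiased_alg n \<mu> lam vary select"
  shows "set_pmf (ea_run n \<mu> lam g init vary select t) \<subseteq> valid_states \<mu> n"
proof (induction t)
  case 0
  then show ?case
    by (auto simp: ea_init_def set_pmf_indep_list_replicate valid_states_def)
next
  case (Suc t)
  then show ?case
    using ea_step_valid[OF alg] by auto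
qed

lemma ea_step_below_imp_parent_below:
  assumes alg: "elitist_unbiased_alg n \<mu> lam vary select" and \<mu>: "0 < \<mu>"
    and st: "st \<in> valid_states \<mu> n" and y: "y \<in> set_pmf (ea_step lam g vary select st)"
    and below: "\<forall>x\<in>set (fst y). g x \<le> c"
  shows "\<forall>x\<in>set (fst st). g x \<le> c"
proof -
  obtain P s where Ps: "st = (P, s)"
    by fastforce
  from y obtain par ops Q where "(par, ops) \<in> set_pmf (vary s)" and Q: "Q \<in> set_pmf (offspring lam par ops P)"
    and y': "y \<in> set_pmf (survivors g select s (par, ops) (P @ Q))"
    unfolding Ps by (rule ea_step_supportE)
  have "length (P @ Q) = \<mu> + lam"
    using st Ps length_offspring[OF Q] unfolding valid_states_def by simp
  then have "\<forall>x\<in>set (P @ Q). g x \<le> c"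
    using survivors_below_imp_candidates_below[OF alg \<mu> _ y' below] by blast
  then show ?thesis
    using Ps by simp
qed

lemma map_flip_state_ea_step:
  assumes alg: "elitist_unbiased_alg n \<mu> lam vary select" and a: "a < n"
    and g: "\<forall>x\<in>cube n. g (flip a x) = g x" and st: "st \<in> valid_states \<mu> n"
  shows "map_pmf (flip_state a) (ea_step lam g vary select st) = ea_step lam g vary select (flip_state a st)"
proof -
  obtain P s where Ps: "st = (P, s)"
    by fastforce
  have P: "(P, s) \<in> valid_states \<mu> n"
    using st Ps by simp
  show ?thesis
    unfolding Ps flip_state_Pair ea_step_eq map_bind_pmf
  proof (rule bind_pmf_cong[OF refl], clarify)
    fix par ops assume ch: "(par, ops) \<in> set_pmf (vary s)"
    have "map_pmf (flip_state a) (bind_pmf (offspring lam par ops P) (\<lambda>Q. survivors g select s (par, ops) (P @ Q)))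
        = bind_pmf (offspring lam par ops P) (\<lambda>Q. survivors g select s (par, ops) (map (flip a) (P @ Q)))"
      unfolding map_bind_pmf
    proof (rule bind_pmf_cong[OF refl])
      fix Q assume Q: "Q \<in> set_pmf (offspring lam par ops P)"
      have "length (P @ Q) = \<mu> + lam" "set (P @ Q) \<subseteq> cube n"
        using P length_offspring[OF Q] offspring_in_cube[OF alg ch P Q]
        unfolding valid_states_def by auto
      then show "map_pmf (flip_state a) (survivors g select s (par, ops) (P @ Q))
          = survivors g select s (par, ops) (map (flip a) (P @ Q))"
        using survivors_map_flip[OF alg] g by (metis subsetD)
    qed
    also have "\<dots> = bind_pmf (offspring lam par ops (map (flip a) P))
        (\<lambda>Q. survivors g select s (par, ops) (map (flip a) P @ Q))"
      by (simp add: offspring_map_flip[OF alg ch P a] bind_map_pmf)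
    finally show "map_pmf (flip_state a) (bind_pmf (offspring lam par ops P) (\<lambda>Q. survivors g select s (par, ops) (P @ Q)))
        = bind_pmf (offspring lam par ops (map (flip a) P)) (\<lambda>Q. survivors g select s (par, ops) (map (flip a) P @ Q))" .
  qed
qed

lemma map_flip_state_ea_run:
  assumes alg: "elitist_unbiased_alg n \<mu> lam vary select" and a: "a < n"
    and g: "\<forall>x\<in>cube n. g (flip a x) = g x"
  shows "map_pmf (flip_state a) (ea_run n \<mu> lam g init vary select t) = ea_run n \<mu> lam g init vary select t"
proof (induction t)
  case 0
  let ?U = "indep_list (replicate \<mu> (uniform_cube n))"
  have "map_pmf (flip_state a) (ea_run n \<mu> lam g init vary select 0)
      = bind_pmf ?U (\<lambda>P. map_pmf (\<lambda>s. (map (flip a) P, s)) (init (map g P)))"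
    by (simp add: ea_init_def map_bind_pmf pmf.map_comp o_def flip_state_def)
  also have "\<dots> = bind_pmf ?U (\<lambda>P. map_pmf (\<lambda>s. (map (flip a) P, s)) (init (map g (map (flip a) P))))"
  proof (rule bind_pmf_cong[OF refl])
    fix P assume "P \<in> set_pmf ?U"
    then have "map g (map (flip a) P) = map g P"
      using g by (auto simp: set_pmf_indep_list_replicate)
    then show "map_pmf (\<lambda>s. (map (flip a) P, s)) (init (map g P))
        = map_pmf (\<lambda>s. (map (flip a) P, s)) (init (map g (map (flip a) P)))"
      by (simp only:)
  qed
  also have "\<dots> = bind_pmf (map_pmf (map (flip a)) ?U) (\<lambda>P. map_pmf (\<lambda>s. (P, s)) (init (map g P)))"
    by (simp add: bind_map_pmf)
  also have "map_pmf (map (flip a)) ?U = ?U"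
    by (simp add: map_pmf_indep_list map_flip_uniform_cube)
  finally show ?case
    by (simp add: ea_init_def)
next
  case (Suc t)
  let ?M = "ea_run n \<mu> lam g init vary select t"
  have "map_pmf (flip_state a) (ea_run n \<mu> lam g init vary select (Suc t))
      = bind_pmf ?M (\<lambda>st. map_pmf (flip_state a) (ea_step lam g vary select st))"
    by (simp add: map_bind_pmf)
  also have "\<dots> = bind_pmf ?M (\<lambda>st. ea_step lam g vary select (flip_state a st))"
    by (intro bind_pmf_cong refl map_flip_state_ea_step[OF alg a g]) (use ea_run_valid[OF alg] in blast)
  also have "\<dots> = bind_pmf (map_pmf (flip_state a) ?M) (ea_step lam g vary select)"
    by (simp add: bind_map_pmf)
  finally show ?case
    using Suc.IH by simp
qed

section \<open>Capping the fitness above c\<close>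

definition cap_fitness :: "(bits \<Rightarrow> real) \<Rightarrow> real \<Rightarrow> bits \<Rightarrow> real" where
  "cap_fitness f c x = (if f x \<le> c then f x else c + 1)"

lemma cap_fitness_le_iff [simp]: "cap_fitness f c x \<le> c \<longleftrightarrow> f x \<le> c"
  unfolding cap_fitness_def by simp

lemma cap_fitness_flip:
  assumes f: "\<forall>y\<in>cube n. f y \<le> c \<longrightarrow> f (flip a y) = f y" and x: "x \<in> cube n"
  shows "cap_fitness f c (flip a x) = cap_fitness f c x"
proof (cases "f x \<le> c")
  case True
  then show ?thesis
    using f x unfolding cap_fitness_def by simp
next
  case False
  have "\<not> f (flip a x) \<le> c"
    using f[rule_format, of "flip a x"] x False by auto
  then show ?thesis
    using False unfolding cap_fitness_def by simp
qed

lemma pmf_bind_pmf_eq: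
  assumes "\<And>x. pmf M x * pmf (K x) y = pmf M' x * pmf (K' x) y"
  shows "pmf (bind_pmf M K) y = pmf (bind_pmf M' K') y"
proof -
  have "ennreal (pmf (bind_pmf M K) y) = ennreal (pmf (bind_pmf M' K') y)"
    unfolding ennreal_pmf_bind nn_integral_measure_pmf
    by (intro nn_integral_cong) (simp add: assms flip: ennreal_mult')
  then show ?thesis
    by simp
qed

lemma pmf_bind_pmf_cong:
  assumes "\<And>x. x \<in> set_pmf M \<Longrightarrow> pmf (K x) y = pmf (K' x) y"
  shows "pmf (bind_pmf M K) y = pmf (bind_pmf M K') y"
  by (rule pmf_bind_pmf_eq) (metis assms mult_zero_left set_pmf_iff)

lemma pmf_ea_step_cap_fitness:
  assumes alg: "elitist_unbiased_alg n \<mu> lam vary select" and \<mu>: "0 < \<mu>"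
    and st: "st \<in> valid_states \<mu> n" and below: "\<forall>x\<in>set (fst y). f x \<le> c"
  shows "pmf (ea_step lam f vary select st) y = pmf (ea_step lam (cap_fitness f c) vary select st) y"
proof -
  obtain P s where Ps: "st = (P, s)"
    by fastforce
  have survivors_eq: "pmf (survivors f select s ch (P @ Q)) y = pmf (survivors (cap_fitness f c) select s ch (P @ Q)) y"
    if Q: "Q \<in> set_pmf (offspring lam par ops P)" for ch par ops Q
  proof (cases "\<forall>x\<in>set (P @ Q). f x \<le> c")
    case True
    then have "map f (P @ Q) = map (cap_fitness f c) (P @ Q)"
      unfolding cap_fitness_def by simp
    then show ?thesis
      unfolding survivors_def by (simp only:)
  next
    case False
    have "length (P @ Q) = \<mu> + lam"
      using st Ps length_offspring[OF Q] unfolding valid_states_def by simp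
    then have "y \<notin> set_pmf (survivors g select s ch (P @ Q))" if "\<forall>x. g x \<le> c \<longleftrightarrow> f x \<le> c" for g
      using survivors_below_imp_candidates_below[OF alg \<mu>, of "P @ Q" y g s ch c] below False that by auto
    then show ?thesis
      by (metis cap_fitness_le_iff pmf_eq_0_set_pmf)
  qed
  show ?thesis
    unfolding Ps ea_step_eq
  proof (rule pmf_bind_pmf_cong, clarify)
    fix par ops
    show "pmf (bind_pmf (offspring lam par ops P) (\<lambda>Q. survivors f select s (par, ops) (P @ Q))) y
      = pmf (bind_pmf (offspring lam par ops P) (\<lambda>Q. survivors (cap_fitness f c) select s (par, ops) (P @ Q))) y"
      by (rule pmf_bind_pmf_cong) (rule survivors_eq)
  qed
qed

lemma pmf_ea_run_cap_fitness:
  assumes alg: "elitist_unbiased_alg n \<mu> lam vary select" and \<mu>: "0 < \<mu>"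
    and below: "\<forall>x\<in>set (fst y). f x \<le> c"
  shows "pmf (ea_run n \<mu> lam f init vary select t) y = pmf (ea_run n \<mu> lam (cap_fitness f c) init vary select t) y"
  using below
proof (induction t arbitrary: y)
  case 0
  have "pmf (map_pmf (\<lambda>s. (P, s)) (init (map f P))) y
      = pmf (map_pmf (\<lambda>s. (P, s)) (init (map (cap_fitness f c) P))) y" for P
  proof (cases "P = fst y")
    case True
    then have "map f P = map (cap_fitness f c) P"
      using "0" unfolding cap_fitness_def by simp
    then show ?thesis
      by (simp only:)
  next
    case False
    then have "y \<notin> set_pmf (map_pmf (\<lambda>s. (P, s)) (init (map g P)))" for g
      by auto
    then show ?thesis
      by (metis pmf_eq_0_set_pmf)
  qed
  then show ?case
    unfolding ea_run.simps ea_init_def by (intro pmf_bind_pmf_cong)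
next
  case (Suc t)
  let ?M = "ea_run n \<mu> lam f init vary select t"
  let ?M' = "ea_run n \<mu> lam (cap_fitness f c) init vary select t"
  have "pmf ?M st * pmf (ea_step lam f vary select st) y
      = pmf ?M' st * pmf (ea_step lam (cap_fitness f c) vary select st) y" for st
  proof (cases "st \<in> valid_states \<mu> n")
    case False
    then have "pmf ?M st = 0" "pmf ?M' st = 0"
      using ea_run_valid[OF alg] by (auto simp: pmf_eq_0_set_pmf)
    then show ?thesis
      by simp
  next
    case valid: True
    show ?thesis
    proof (cases "\<forall>x\<in>set (fst st). f x \<le> c")
      case True
      then show ?thesis
        using Suc pmf_ea_step_cap_fitness[OF alg \<mu> valid] by simp
    next
      case False
      have "y \<notin> set_pmf (ea_step lam g vary select st)" if "\<forall>x. g x \<le> c \<longleftrightarrow> f x \<le> c" for g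
        using ea_step_below_imp_parent_below[OF alg \<mu> valid, of y g c] Suc.prems False that by auto
      then show ?thesis
        by (metis cap_fitness_le_iff mult_zero_right pmf_eq_0_set_pmf)
    qed
  qed
  then show ?case
    unfolding ea_run.simps by (rule pmf_bind_pmf_eq)
qed

lemma map_pmf_cond_pmf_involution:
  assumes ne: "set_pmf M \<inter> B \<noteq> {}" and inv: "\<And>x. \<psi> (\<psi> x) = x"
    and pres: "\<And>x. x \<in> set_pmf M \<Longrightarrow> x \<in> B \<Longrightarrow> \<psi> x \<in> B \<and> pmf M (\<psi> x) = pmf M x"
  shows "map_pmf \<psi> (cond_pmf M B) = cond_pmf M B"
proof (rule pmf_eqI)
  fix x
  have "pmf (map_pmf \<psi> (cond_pmf M B)) x = pmf (cond_pmf M B) (\<psi> x)"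
    by (metis inv injI pmf_map_inj')
  also have "\<dots> = pmf (cond_pmf M B) x"
  proof (cases "x \<in> set_pmf M \<inter> B \<or> \<psi> x \<in> set_pmf M \<inter> B")
    case True
    then have "\<psi> x \<in> B \<and> x \<in> B \<and> pmf M (\<psi> x) = pmf M x"
    proof
      assume "x \<in> set_pmf M \<inter> B"
      then show ?thesis
        using pres[of x] by auto
    next
      assume "\<psi> x \<in> set_pmf M \<inter> B"
      then show ?thesis
        using pres[of "\<psi> x"] inv[of x] by auto
    qed
    then show ?thesis
      by (simp add: pmf_cond[OF ne])
  next
    case False
    then show ?thesis
      by (auto simp: pmf_cond[OF ne] set_pmf_iff)
  qed
  finally show "pmf (map_pmf \<psi> (cond_pmf M B)) x = pmf (cond_pmf M B) x" .
qed

lemma map_flip_state_cond_ea_run: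
  assumes alg: "elitist_unbiased_alg n \<mu> lam vary select" and \<mu>: "0 < \<mu>" and a: "a < n"
    and f: "\<forall>y\<in>cube n. f y \<le> c \<longrightarrow> f (flip a y) = f y"
    and ne: "set_pmf (ea_run n \<mu> lam f init vary select t) \<inter> best_is f c \<noteq> {}"
  shows "map_pmf (flip_state a) (cond_pmf (ea_run n \<mu> lam f init vary select t) (best_is f c))
    = cond_pmf (ea_run n \<mu> lam f init vary select t) (best_is f c)"
proof (rule map_pmf_cond_pmf_involution[OF ne flip_state_flip_state])
  let ?M = "ea_run n \<mu> lam f init vary select t"
  let ?M' = "ea_run n \<mu> lam (cap_fitness f c) init vary select t"
  fix st assume "st \<in> set_pmf ?M" and best: "st \<in> best_is f c"
  then have valid: "st \<in> valid_states \<mu> n"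
    using ea_run_valid[OF alg] by blast
  then have "fst st \<noteq> []"
    using \<mu> unfolding valid_states_def by auto
  then have below: "\<forall>x\<in>set (fst st). f x \<le> c"
    using best unfolding best_is_def by auto
  then have "f ` set (fst (flip_state a st)) = f ` set (fst st)"
    using f valid unfolding flip_state_def valid_states_def by (auto simp: image_image intro!: image_cong)
  then have best': "flip_state a st \<in> best_is f c"
    using best unfolding best_is_def by simp
  have below': "\<forall>x\<in>set (fst (flip_state a st)). f x \<le> c"
  proof
    fix x assume "x \<in> set (fst (flip_state a st))"
    then have "f x \<in> f ` set (fst st)"
      using \<open>f ` set (fst (flip_state a st)) = f ` set (fst st)\<close> by blast
    then show "f x \<le> c"
      using below by auto
  qed
  have "pmf ?M (flip_state a st) = pmf ?M' (flip_state a st)"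
    using pmf_ea_run_cap_fitness[OF alg \<mu> below'] .
  also have "\<dots> = pmf (map_pmf (flip_state a) ?M') (flip_state a st)"
    using map_flip_state_ea_run[OF alg a] cap_fitness_flip[OF f] by simp
  also have "\<dots> = pmf ?M st"
    using pmf_ea_run_cap_fitness[OF alg \<mu> below] by (simp add: pmf_map_inj' inj_flip_state)
  finally show "flip_state a st \<in> best_is f c \<and> pmf ?M (flip_state a st) = pmf ?M st"
    using best' by simp
qed

lemma flip_invariant_if_Zset_invariant:
  assumes Z: "\<forall>y\<in>cube n. f y \<le> c \<longrightarrow> (\<forall>z\<in>Zset n I. f (xorv y z) = f y)"
    and a: "a \<in> I" "a < n"
  shows "\<forall>y\<in>cube n. f y \<le> c \<longrightarrow> f (flip a y) = f y"
proof (intro ballI impI)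
  fix y assume y: "y \<in> cube n" and "f y \<le> c"
  then have "f (xorv y (unit_bits n a)) = f y"
    using Z unit_bits_in_Zset[OF a] by blast
  then show "f (flip a y) = f y"
    using xorv_unit_bits[OF y a(2)] by simp
qed

lemma set_pmf_map_nth_subset_cube:
  assumes "set_pmf C \<subseteq> valid_states \<mu> n" "j < \<mu>"
  shows "set_pmf (map_pmf (\<lambda>st. fst st ! j) C) \<subseteq> cube n"
proof
  fix x assume "x \<in> set_pmf (map_pmf (\<lambda>st. fst st ! j) C)"
  then obtain st where "st \<in> set_pmf C" "x = fst st ! j"
    by auto
  then have "x \<in> set (fst st)" "set (fst st) \<subseteq> cube n"
    using assms unfolding valid_states_def by auto
  then show "x \<in> cube n"
    by blast
qed

lemma map_flip_map_nth:
  assumes "set_pmf C \<subseteq> valid_states \<mu> n" "j < \<mu>" and C_inv: "map_pmf (flip_state a) C = C"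
  shows "map_pmf (flip a) (map_pmf (\<lambda>st. fst st ! j) C) = map_pmf (\<lambda>st. fst st ! j) C"
proof -
  have "map_pmf (flip a) (map_pmf (\<lambda>st. fst st ! j) C) = map_pmf (\<lambda>st. fst (flip_state a st) ! j) C"
    unfolding pmf.map_comp o_def
  proof (rule map_pmf_cong[OF refl])
    fix st assume "st \<in> set_pmf C"
    then have "j < length (fst st)"
      using assms unfolding valid_states_def by auto
    then show "flip a (fst st ! j) = fst (flip_state a st) ! j"
      unfolding flip_state_def by simp
  qed
  also have "\<dots> = map_pmf (\<lambda>st. fst st ! j) C"
    by (subst (2) C_inv[symmetric]) (simp add: pmf.map_comp o_def)
  finally show ?thesis .
qed

theorem lemma4:
  fixes n \<mu> lam t k :: nat and f :: "bits \<Rightarrow> real" and c :: real and I :: "nat set"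
    and init :: "real list \<Rightarrow> 's pmf"
    and vary :: "'s \<Rightarrow> (nat list \<times> varop list) pmf"
    and select :: "'s \<Rightarrow> nat list \<times> varop list \<Rightarrow> real list \<Rightarrow> (nat list \<times> 's) pmf"
  assumes "c \<in> f ` cube n"
    and "I \<subseteq> {..<n}"
    and "\<forall>y\<in>cube n. f y \<le> c \<longrightarrow> (\<forall>z\<in>Zset n I. f (xorv y z) = f y)"
    and "elitist_unbiased_alg n \<mu> lam vary select"
    and "k \<in> {1..\<mu>}"
    and "measure_pmf.prob (ea_run n \<mu> lam f init vary select t) (best_is f c) > 0"
  shows "let D = map_pmf (\<lambda>st. fst st ! (k - 1))
                   (cond_pmf (ea_run n \<mu> lam f init vary select t) (best_is f c))
         in prob_space.indep_vars (measure_pmf D) (\<lambda>_. count_space UNIV) (bit_family n I) (Some ` I \<union> {None})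
            \<and> (\<forall>i\<in>I. \<forall>b. measure_pmf.prob D {x. x ! i = b} = 1 / 2)"
proof -
  note I = assms(2) and Z = assms(3) and alg = assms(4)
  let ?M = "ea_run n \<mu> lam f init vary select t"
  define C where "C = cond_pmf ?M (best_is f c)"
  have \<mu>: "0 < \<mu>" "k - 1 < \<mu>"
    using assms(5) by auto
  have ne: "set_pmf ?M \<inter> best_is f c \<noteq> {}"
    using assms(6) measure_Int_set_pmf[of ?M "best_is f c"] by (auto simp: Int_commute)
  have valid: "set_pmf C \<subseteq> valid_states \<mu> n"
    using ea_run_valid[OF alg] unfolding C_def set_cond_pmf[OF ne] by blast
  have "\<forall>a\<in>I. map_pmf (flip_state a) C = C"
    unfolding C_def using map_flip_state_cond_ea_run[OF alg \<mu>(1) _ _ ne]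
      flip_invariant_if_Zset_invariant[OF Z] I by blast
  then show ?thesis
    unfolding Let_def C_def[symmetric]
    using flip_invariant_bits_indep_uniform[OF set_pmf_map_nth_subset_cube[OF valid \<mu>(2)] I]
      map_flip_map_nth[OF valid \<mu>(2)] by blast
qed

end
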